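(* Let $T_1$ and $T_2$ be $\pi$-increasing trees with disjoint vertex-sets, with $T_1$ irreducible. For $i=1,2$, let $m_i$ be the maximum element of $V(T_i)$. Let $v_2$ be a vertex of $T_2$ with $v_2<m_1$, and let $T=\mathrm{spl}(T_1,m_1;T_2,v_2)$. (a) If $m_1>m_2$, then $T$ is reducible; more precisely, $G_{m_1}(T)$ is the disjoint union $G_{m_1}(T_1)\sqcup G_{v_2}(T_2)$. (b) If $m_1<m_2$ and $T_2$ is irreducible, then $T$ is irreducible.
   Context: Standing assumptions: $r\ge2$ and $\pi$ is a set partition of $\{1,\dots,r\}$ having $\{1\}$ as a block; its blocks are $\pi_1,\dots,\pi_k$ with maxima $\mu_i=\max\pi_i$; $\pi^x$ denotes the block containing $x$. An unordered increasing tree is a rooted tree on distinct positive integers, sons unordered, each son larger than its father. A $\pi$-increasing tree is an unordered increasing tree $T$ whose vertex-set is a union of blocks of $\pi$ and such that for any two elements $i<j$ of a same block of $\pi$ contained in $V(T)$, $i$ is an ancestor of $j$ in $T$. $v$-decomposition: for a vertex $v$ of $T$ with chain $a_1<\dots<a_\ell=v$ from the root to $v$, removing the chain edges leaves components $T^{(a_j)}$ rooted at $a_j$. Splice: for unordered increasing trees $T_1,T_2$ with disjoint vertex-sets and $v_1\in V(T_1)$, $v_2\in V(T_2)$, $v_1>v_2$, $\mathrm{spl}(T_1,v_1;T_2,v_2)$ is the tree on $V(T_1)\cup V(T_2)$ obtained by merging the root-to-$v_1$ chain of $T_1$ and the root-to-$v_2$ chain of $T_2$ into one increasing chain (root = smallest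 element, ending at $v_1$) and attaching at each chain vertex its component from the $v_1$-decomposition of $T_1$ or the $v_2$-decomposition of $T_2$. $v$-dependence graph $G_v(T)$ of a $\pi$-increasing tree $T$: directed graph whose vertices are the blocks of $\pi$ contained in $V(T)$; for each such block $\pi_i$ whose maximum $\mu_i$ is not on the chain $a_1,\dots,a_\ell$ from the root to $v$, $\mu_i$ is a non-root vertex of a unique $T^{(a_j)}$ and there is an edge (possibly a loop) from $\pi_i$ to $\pi^{a_j}$; no other edges. A $\pi$-increasing tree with maximum vertex $M$ is irreducible if $G_M(T)$ is connected (ignoring directions), reducible otherwise. *)

theory Defs
  imports Main
begin

definition set_partition :: "nat \<Rightarrow> nat set set \<Rightarrow> bool" where
  "set_partition r P \<longleftrightarrow> \<Union>P = {1..r} \<and> (\<forall>B\<in>P. B \<noteq> {}) \<and>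
     (\<forall>B\<in>P. \<forall>B'\<in>P. B \<noteq> B' \<longrightarrow> B \<inter> B' = {})"

definition blk :: "nat set set \<Rightarrow> nat \<Rightarrow> nat set" where
  "blk P x = (THE B. B \<in> P \<and> x \<in> B)"

text \<open>An unordered increasing tree is represented by its (finite, nonempty) vertex set V of
  positive integers and a parent function par; the root is Min V, and every non-root vertex
  has its father in V, smaller than itself.\<close>
definition increasing_tree :: "nat set \<Rightarrow> (nat \<Rightarrow> nat) \<Rightarrow> bool" where
  "increasing_tree V par \<longleftrightarrow> finite V \<and> V \<noteq> {} \<and> 0 \<notin> V \<and>
     (\<forall>y\<in>V. y \<noteq> Min V \<longrightarrow> par y \<in> V \<and> par y < y)"

definition tedges :: "nat set \<Rightarrow> (nat \<Rightarrow> nat) \<Rightarrow> (nat \<times> nat) set" where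
  "tedges V par = {(par y, y) | y. y \<in> V \<and> y \<noteq> Min V}"

definition anc :: "nat set \<Rightarrow> (nat \<Rightarrow> nat) \<Rightarrow> nat \<Rightarrow> nat \<Rightarrow> bool" where
  "anc V par a x \<longleftrightarrow> (a, x) \<in> (tedges V par)\<^sup>+"

definition chain :: "nat set \<Rightarrow> (nat \<Rightarrow> nat) \<Rightarrow> nat \<Rightarrow> nat set" where
  "chain V par v = {a. a = v \<or> anc V par a v}"

text \<open>In the v-decomposition, the chain vertex a_j such that x lies in the component T^(a_j):
  the deepest vertex of the root-to-v chain which is an ancestor of (or equal to) x.\<close>
definition comp_root :: "nat set \<Rightarrow> (nat \<Rightarrow> nat) \<Rightarrow> nat \<Rightarrow> nat \<Rightarrow> nat" where
  "comp_root V par v x = Max (chain V par v \<inter> chain V par x)"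

definition pi_increasing :: "nat set set \<Rightarrow> nat set \<Rightarrow> (nat \<Rightarrow> nat) \<Rightarrow> bool" where
  "pi_increasing P V par \<longleftrightarrow> increasing_tree V par \<and>
     V = \<Union>{B \<in> P. B \<subseteq> V} \<and>
     (\<forall>B\<in>P. B \<subseteq> V \<longrightarrow> (\<forall>i\<in>B. \<forall>j\<in>B. i < j \<longrightarrow> anc V par i j))"

definition dg_vert :: "nat set set \<Rightarrow> nat set \<Rightarrow> nat set set" where
  "dg_vert P V = {B \<in> P. B \<subseteq> V}"

definition dg_edges :: "nat set set \<Rightarrow> nat set \<Rightarrow> (nat \<Rightarrow> nat) \<Rightarrow> nat \<Rightarrow> (nat set \<times> nat set) set" where
  "dg_edges P V par v =
     {(B, blk P (comp_root V par v (Max B))) | B. B \<in> P \<and> B \<subseteq> V \<and> Max B \<notin> chain V par v}"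

definition dg_connected :: "nat set set \<Rightarrow> (nat set \<times> nat set) set \<Rightarrow> bool" where
  "dg_connected Vs Es \<longleftrightarrow> (\<forall>B\<in>Vs. \<forall>B'\<in>Vs. (B, B') \<in> (Es \<union> Es\<inverse>)\<^sup>*)"

definition irreducible :: "nat set set \<Rightarrow> nat set \<Rightarrow> (nat \<Rightarrow> nat) \<Rightarrow> bool" where
  "irreducible P V par \<longleftrightarrow> pi_increasing P V par \<and>
     dg_connected (dg_vert P V) (dg_edges P V par (Max V))"

definition reducible :: "nat set set \<Rightarrow> nat set \<Rightarrow> (nat \<Rightarrow> nat) \<Rightarrow> bool" where
  "reducible P V par \<longleftrightarrow> pi_increasing P V par \<and>
     \<not> dg_connected (dg_vert P V) (dg_edges P V par (Max V))"

text \<open>Splice spl(T1,v1;T2,v2): vertex set V1 \<union> V2; the merged chain C is the union of the two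
  root-to-v chains, each chain vertex gets its predecessor in C as father; every other vertex keeps
  its father (components of the decompositions are attached unchanged).\<close>
definition spl_par :: "nat set \<Rightarrow> (nat \<Rightarrow> nat) \<Rightarrow> nat \<Rightarrow> nat set \<Rightarrow> (nat \<Rightarrow> nat) \<Rightarrow> nat \<Rightarrow> nat \<Rightarrow> nat" where
  "spl_par V1 p1 v1 V2 p2 v2 x =
     (let C = chain V1 p1 v1 \<union> chain V2 p2 v2 in
      if x \<in> C then Max {c \<in> C. c < x}
      else if x \<in> V1 then p1 x else p2 x)"

end

theory Submission
  imports Defs
begin

text \<open>Splicing merges the two root chains and leaves every other father unchanged. Hence in
  \<open>T\<close> the chain to a vertex \<open>x\<close> of \<open>T\<^sub>1\<close> is its chain in \<open>T\<^sub>1\<close> together with the vertices of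
  the chain to \<open>v\<^sub>2\<close> lying below \<open>c\<^sub>1(x)\<close>, the point where the chain to \<open>x\<close> leaves the chain
  to \<open>m\<^sub>1\<close>. Consequently the component root of \<open>x\<close> in the \<open>w\<close>-decomposition of \<open>T\<close> is the one
  of \<open>T\<^sub>1\<close> when \<open>w\<close> lies in \<open>T\<^sub>1\<close>, and \<open>min (c\<^sub>1(x)) (c\<^sub>2(w))\<close> when \<open>w\<close> lies in \<open>T\<^sub>2\<close>.

  (a) If \<open>m\<^sub>2 < m\<^sub>1\<close>, the chain to \<open>m\<^sub>1\<close> in \<open>T\<close> is the merged chain, so the edges of
  \<open>G\<^sub>m\<^sub>1(T)\<close> are those of \<open>G\<^sub>m\<^sub>1(T\<^sub>1)\<close> and \<open>G\<^sub>v\<^sub>2(T\<^sub>2)\<close>, and none of them joins a block of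
  \<open>T\<^sub>1\<close> to a block of \<open>T\<^sub>2\<close>.

  (b) If \<open>m\<^sub>1 < m\<^sub>2\<close>, let \<open>c = c\<^sub>2(m\<^sub>2) \<le> v\<^sub>2 < m\<^sub>1\<close>. The edges of \<open>G\<^sub>m\<^sub>2(T\<^sub>2)\<close> survive in
  \<open>G\<^sub>m\<^sub>2(T)\<close>, and each block of \<open>T\<^sub>1\<close> either keeps its edge of \<open>G\<^sub>m\<^sub>1(T\<^sub>1)\<close> or is redirected
  to the block of \<open>c\<close>. The block of \<open>m\<^sub>1\<close> is redirected, and moving along an edge of
  \<open>G\<^sub>m\<^sub>1(T\<^sub>1)\<close> preserves being joined to the block of \<open>c\<close>; so irreducibility of \<open>T\<^sub>1\<close> and
  \<open>T\<^sub>2\<close> joins every block of \<open>T\<close> to the block of \<open>c\<close>.\<close>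

lemma anc_iff_parent:
  "anc V par a x \<longleftrightarrow> x \<in> V \<and> x \<noteq> Min V \<and> (a = par x \<or> anc V par a (par x))"
proof
  assume "anc V par a x"
  then have "(a, x) \<in> (tedges V par)\<^sup>+" by (simp add: anc_def)
  then show "x \<in> V \<and> x \<noteq> Min V \<and> (a = par x \<or> anc V par a (par x))"
  proof (cases rule: tranclE)
    case base then show ?thesis by (auto simp: tedges_def)
  next
    case (step c) then show ?thesis by (auto simp: tedges_def anc_def)
  qed
next
  assume h: "x \<in> V \<and> x \<noteq> Min V \<and> (a = par x \<or> anc V par a (par x))"
  then have "(par x, x) \<in> tedges V par" by (auto simp: tedges_def)
  with h show "anc V par a x"
    unfolding anc_def by (auto intro: trancl_into_trancl)
qed

lemma mem_chain_iff: "a \<in> chain V par v \<longleftrightarrow> a = v \<or> anc V par a v"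
  by (simp add: chain_def)

lemma comp_root_eqI:
  assumes "finite (chain V par u)" "c \<in> chain V par u" "c \<in> chain V par x"
    "\<And>d. d \<in> chain V par u \<Longrightarrow> d \<in> chain V par x \<Longrightarrow> d \<le> c"
  shows "comp_root V par u x = c"
  unfolding comp_root_def using assms by (intro Max_eqI) auto

lemma mem_dg_edges_iff:
  "(X, Y) \<in> dg_edges P V par v \<longleftrightarrow> X \<in> P \<and> X \<subseteq> V \<and> Max X \<notin> chain V par v \<and>
     Y = blk P (comp_root V par v (Max X))"
  by (auto simp: dg_edges_def)

lemma chain_cong:
  assumes "\<And>y. y \<in> V \<Longrightarrow> p y = q y"
  shows "chain V p = chain V q"
proof -
  have "tedges V p = tedges V q" using assms by (auto simp: tedges_def)
  then show ?thesis by (intro ext) (simp add: chain_def anc_def)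
qed

lemma comp_root_cong:
  assumes "\<And>y. y \<in> V \<Longrightarrow> p y = q y"
  shows "comp_root V p = comp_root V q"
proof -
  have "chain V p = chain V q" using assms by (rule chain_cong)
  then show ?thesis by (intro ext) (simp add: comp_root_def)
qed

locale itree =
  fixes V :: "nat set" and par :: "nat \<Rightarrow> nat"
  assumes increasing: "increasing_tree V par"
begin

lemma finite_vertices: "finite V" and vertices_nonempty: "V \<noteq> {}" and zero_notin_vertices: "0 \<notin> V"
  using increasing by (auto simp: increasing_tree_def)

lemma par_mem_less: "y \<in> V \<Longrightarrow> y \<noteq> Min V \<Longrightarrow> par y \<in> V \<and> par y < y"
  using increasing by (auto simp: increasing_tree_def)

lemma anc_imp_mem_less: "anc V par a x \<Longrightarrow> a \<in> V \<and> x \<in> V \<and> a < x"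
proof -
  assume "anc V par a x"
  then have "(a, x) \<in> (tedges V par)\<^sup>+" by (simp add: anc_def)
  then show ?thesis
  proof (induction rule: trancl_induct)
    case (base y) then show ?case using par_mem_less by (auto simp: tedges_def)
  next
    case (step y z)
    then have "y = par z" "z \<in> V" "z \<noteq> Min V" by (auto simp: tedges_def)
    then show ?case using step.IH par_mem_less[of z] by auto
  qed
qed

lemma anc_trans: "anc V par a b \<Longrightarrow> anc V par b c \<Longrightarrow> anc V par a c"
  unfolding anc_def by (rule trancl_trans)

lemma anc_par: "x \<in> V \<Longrightarrow> x \<noteq> Min V \<Longrightarrow> anc V par (par x) x"
  by (subst anc_iff_parent) auto

lemma anc_Min: "x \<in> V \<Longrightarrow> x \<noteq> Min V \<Longrightarrow> anc V par (Min V) x"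
proof (induction x rule: less_induct)
  case (less x)
  have px: "par x \<in> V" "par x < x" using par_mem_less less.prems by auto
  show ?case
  proof (cases "par x = Min V")
    case True then show ?thesis using anc_par less.prems by metis
  next
    case False
    then have "anc V par (Min V) (par x)" using less.IH px by auto
    then show ?thesis using anc_par less.prems anc_trans by blast
  qed
qed

lemma anc_linear: "anc V par a x \<Longrightarrow> anc V par b x \<Longrightarrow> a = b \<or> anc V par a b \<or> anc V par b a"
proof (induction x rule: less_induct)
  case (less x)
  from less.prems have x: "x \<in> V" "x \<noteq> Min V" by (auto simp: anc_iff_parent[of V par _ x])
  have px: "par x < x" using par_mem_less x by auto
  from less.prems(1) have a: "a = par x \<or> anc V par a (par x)" by (subst (asm) anc_iff_parent) auto
  from less.prems(2) have b: "b = par x \<or> anc V par b (par x)" by (subst (asm) anc_iff_parent) auto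
  from a b show ?case using less.IH[OF px] by auto
qed

lemma chain_le: "a \<in> chain V par v \<Longrightarrow> a \<le> v"
  using anc_imp_mem_less by (auto simp: mem_chain_iff dest: less_imp_le)

lemma chain_subset: "v \<in> V \<Longrightarrow> chain V par v \<subseteq> V"
  using anc_imp_mem_less by (auto simp: mem_chain_iff)

lemma finite_chain: "v \<in> V \<Longrightarrow> finite (chain V par v)"
  using chain_subset finite_vertices finite_subset by blast

lemma Min_in_chain: "v \<in> V \<Longrightarrow> Min V \<in> chain V par v"
  using anc_Min by (auto simp: mem_chain_iff)

lemma self_in_chain: "v \<in> chain V par v"
  by (simp add: mem_chain_iff)

lemma chain_subset_chain: "c \<in> chain V par z \<Longrightarrow> chain V par c \<subseteq> chain V par z"
  using anc_trans by (auto simp: mem_chain_iff)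

lemma chain_mem_chain_of_le:
  assumes c: "c \<in> chain V par u" and d: "d \<in> chain V par u" and le: "c \<le> d"
  shows "c \<in> chain V par d"
proof (cases "c = d \<or> d = u")
  case True then show ?thesis using c self_in_chain by auto
next
  case False
  then have du: "anc V par d u" and lt: "c < d" using d le by (auto simp: mem_chain_iff)
  then have cu: "anc V par c u" using c anc_imp_mem_less[OF du] by (auto simp: mem_chain_iff)
  from anc_linear[OF cu du] lt anc_imp_mem_less[of d c] show ?thesis by (auto simp: mem_chain_iff)
qed

lemma comp_root_props:
  assumes u: "u \<in> V" and x: "x \<in> V"
  shows "comp_root V par u x \<in> chain V par u" "comp_root V par u x \<in> chain V par x"
    "chain V par u \<inter> chain V par x = {a \<in> chain V par u. a \<le> comp_root V par u x}"
proof -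
  let ?S = "chain V par u \<inter> chain V par x"
  have fS: "finite ?S" using finite_chain[OF u] by simp
  have "?S \<noteq> {}" using Min_in_chain u x by blast
  then have m: "Max ?S \<in> ?S" by (rule Max_in[OF fS])
  then show "comp_root V par u x \<in> chain V par u" "comp_root V par u x \<in> chain V par x"
    by (auto simp: comp_root_def)
  have "a \<in> ?S" if "a \<in> chain V par u" "a \<le> Max ?S" for a
  proof -
    have "a \<in> chain V par (Max ?S)" using chain_mem_chain_of_le[of a u "Max ?S"] m that by blast
    then show ?thesis using chain_subset_chain[of "Max ?S" x] m that(1) by blast
  qed
  moreover have "a \<le> Max ?S" if "a \<in> ?S" for a using fS that by (rule Max_ge)
  ultimately show "?S = {a \<in> chain V par u. a \<le> comp_root V par u x}"
    unfolding comp_root_def by blast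
qed

lemma comp_root_self:
  assumes "v \<in> V"
  shows "comp_root V par v v = v"
  by (rule comp_root_eqI) (use assms finite_chain self_in_chain chain_le in auto)

lemma min_mem_chains:
  assumes "c \<in> chain V par u" "c' \<in> chain V par u" "c \<in> chain V par y" "c' \<in> chain V par z"
  shows "min c c' \<in> chain V par y \<inter> chain V par z"
proof (cases "c \<le> c'")
  case True
  then have "c \<in> chain V par c'" using chain_mem_chain_of_le assms(1,2) by blast
  then have "c \<in> chain V par z" using chain_subset_chain[OF assms(4)] by blast
  then show ?thesis using True assms(3) by (simp add: min_def)
next
  case False
  then have "c' \<in> chain V par c" using chain_mem_chain_of_le[OF assms(2,1)] by simp
  then have "c' \<in> chain V par y" using chain_subset_chain[OF assms(3)] by blast
  then show ?thesis using False assms(4) by (simp add: min_def)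
qed

end

locale splice = T1: itree V1 p1 + T2: itree V2 p2
  for V1 p1 V2 p2 +
  fixes u1 u2 :: nat
  assumes u1: "u1 \<in> V1" and u2: "u2 \<in> V2" and disjoint: "V1 \<inter> V2 = {}"
begin

abbreviation "K1 \<equiv> chain V1 p1 u1"
abbreviation "K2 \<equiv> chain V2 p2 u2"
abbreviation "VV \<equiv> V1 \<union> V2"
abbreviation "pp \<equiv> spl_par V1 p1 u1 V2 p2 u2"

lemma K1_subset: "K1 \<subseteq> V1" using T1.chain_subset u1 .
lemma K2_subset: "K2 \<subseteq> V2" using T2.chain_subset u2 .

lemma finite_merged_chain: "finite (K1 \<union> K2)"
  using T1.finite_chain[OF u1] T2.finite_chain[OF u2] by simp

lemma Min_in_merged_chain: "Min VV \<in> K1 \<union> K2"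
proof -
  have "Min VV = min (Min V1) (Min V2)"
    using Min_Un T1.finite_vertices T2.finite_vertices T1.vertices_nonempty T2.vertices_nonempty by blast
  then show ?thesis using T1.Min_in_chain[OF u1] T2.Min_in_chain[OF u2] by (auto simp: min_def)
qed

lemma Min_le: "y \<in> VV \<Longrightarrow> Min VV \<le> y"
  using T1.finite_vertices T2.finite_vertices by simp

lemma spl_par_merged_chain:
  assumes x: "x \<in> K1 \<union> K2" "x \<noteq> Min VV"
  shows "pp x \<in> K1 \<union> K2" "pp x < x" "\<And>c. c \<in> K1 \<union> K2 \<Longrightarrow> c < x \<Longrightarrow> c \<le> pp x"
proof -
  let ?S = "{c \<in> K1 \<union> K2. c < x}"
  have fS: "finite ?S" using finite_merged_chain by simp
  have "Min VV < x" using Min_le[of x] x K1_subset K2_subset by auto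
  then have "?S \<noteq> {}" using Min_in_merged_chain by blast
  then have "Max ?S \<in> ?S" by (rule Max_in[OF fS])
  moreover have "pp x = Max ?S" using x by (simp add: spl_par_def)
  ultimately show "pp x \<in> K1 \<union> K2" "pp x < x" by auto
  show "\<And>c. c \<in> K1 \<union> K2 \<Longrightarrow> c < x \<Longrightarrow> c \<le> pp x"
    using \<open>pp x = Max ?S\<close> fS by simp
qed

lemma spl_par_V1: "x \<in> V1 \<Longrightarrow> x \<notin> K1 \<Longrightarrow> pp x = p1 x"
  using K2_subset disjoint by (auto simp: spl_par_def)

lemma spl_par_V2: "x \<in> V2 \<Longrightarrow> x \<notin> K2 \<Longrightarrow> pp x = p2 x"
  using K1_subset disjoint by (auto simp: spl_par_def)

lemma increasing_tree_splice: "increasing_tree VV pp"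
proof -
  have "pp y \<in> VV \<and> pp y < y" if y: "y \<in> VV" "y \<noteq> Min VV" for y
  proof -
    consider "y \<in> K1 \<union> K2" | "y \<in> V1 - K1" | "y \<in> V2 - K2" using y(1) by blast
    then show ?thesis
    proof cases
      case 1 then show ?thesis using spl_par_merged_chain[OF _ y(2)] K1_subset K2_subset by blast
    next
      case 2
      then have "y \<noteq> Min V1" using T1.Min_in_chain[OF u1] by auto
      then show ?thesis using 2 T1.par_mem_less spl_par_V1 by auto
    next
      case 3
      then have "y \<noteq> Min V2" using T2.Min_in_chain[OF u2] by auto
      then show ?thesis using 3 T2.par_mem_less spl_par_V2 by auto
    qed
  qed
  then show ?thesis
    using T1.finite_vertices T2.finite_vertices T1.vertices_nonempty T1.zero_notin_vertices T2.zero_notin_vertices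
    by (auto simp: increasing_tree_def)
qed

end

sublocale splice \<subseteq> T: itree "V1 \<union> V2" "spl_par V1 p1 u1 V2 p2 u2"
  by unfold_locales (rule increasing_tree_splice)

context splice
begin

lemma anc_splice_merged_chain:
  "x \<in> K1 \<union> K2 \<Longrightarrow> anc VV pp a x \<longleftrightarrow> a \<in> K1 \<union> K2 \<and> a < x"
proof (induction x arbitrary: a rule: less_induct)
  case (less x)
  show ?case
  proof (cases "x = Min VV")
    case True
    then show ?thesis using Min_le K1_subset K2_subset by (subst anc_iff_parent) force
  next
    case False
    note px = spl_par_merged_chain[OF less.prems False]
    have "anc VV pp a x \<longleftrightarrow> a = pp x \<or> anc VV pp a (pp x)"
      using less.prems False K1_subset K2_subset by (subst anc_iff_parent) auto
    also have "\<dots> \<longleftrightarrow> a = pp x \<or> (a \<in> K1 \<union> K2 \<and> a < pp x)"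
      using less.IH[OF px(2,1)] by simp
    also have "\<dots> \<longleftrightarrow> a \<in> K1 \<union> K2 \<and> a < x"
      using px by force
    finally show ?thesis .
  qed
qed

lemma anc_splice_V1:
  "x \<in> V1 \<Longrightarrow> anc VV pp a x \<longleftrightarrow>
     anc V1 p1 a x \<or> (a \<in> K2 \<and> (\<exists>c\<in>K1 \<inter> chain V1 p1 x. a < c))"
proof (induction x arbitrary: a rule: less_induct)
  case (less x)
  show ?case
  proof (cases "x \<in> K1")
    case True
    have "anc VV pp a x \<longleftrightarrow> a \<in> K1 \<union> K2 \<and> a < x"
      using anc_splice_merged_chain True by blast
    moreover have "a \<in> K1 \<and> a < x \<longleftrightarrow> anc V1 p1 a x"
      using T1.chain_mem_chain_of_le[OF _ True, of a] T1.chain_subset_chain[OF True]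
        T1.anc_imp_mem_less by (auto simp: mem_chain_iff)
    moreover have "(\<exists>c\<in>K1 \<inter> chain V1 p1 x. a < c) \<longleftrightarrow> a < x"
      using True T1.self_in_chain T1.chain_le by (meson IntI IntD2 order_less_le_trans)
    ultimately show ?thesis by blast
  next
    case False
    have x: "x \<noteq> Min VV" "x \<noteq> Min V1"
      using Min_in_merged_chain T1.Min_in_chain[OF u1] False less.prems K2_subset disjoint by auto
    have px: "pp x = p1 x" using spl_par_V1 less.prems False by simp
    have p1x: "p1 x \<in> V1" "p1 x < x" using T1.par_mem_less less.prems x(2) by auto
    have anc1: "\<And>b. anc V1 p1 b x \<longleftrightarrow> b = p1 x \<or> anc V1 p1 b (p1 x)"
      using x(2) less.prems by (subst anc_iff_parent) simp
    have "\<And>c. c \<in> K1 \<Longrightarrow> c \<in> chain V1 p1 x \<longleftrightarrow> c \<in> chain V1 p1 (p1 x)"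
      using False anc1 by (auto simp: mem_chain_iff)
    moreover have "anc VV pp a x \<longleftrightarrow> a = p1 x \<or> anc VV pp a (p1 x)"
      using x(1) less.prems px by (subst anc_iff_parent) simp
    ultimately show ?thesis
      unfolding less.IH[OF p1x(2,1)] anc1[of a] by blast
  qed
qed

lemma chain_splice_V1:
  assumes x: "x \<in> V1"
  shows "chain VV pp x = chain V1 p1 x \<union> {a \<in> K2. a < comp_root V1 p1 u1 x}"
proof -
  note cr = T1.comp_root_props[OF u1 x]
  have "(\<exists>c\<in>K1 \<inter> chain V1 p1 x. a < c) \<longleftrightarrow> a < comp_root V1 p1 u1 x" for a
    using cr by auto
  then show ?thesis
    using anc_splice_V1[OF x] by (auto simp: mem_chain_iff)
qed

lemma anc_splice_of_anc_V1: "anc V1 p1 a x \<Longrightarrow> anc VV pp a x"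
  using anc_splice_V1 T1.anc_imp_mem_less by blast

text \<open>\<open>spl(T\<^sub>1,u\<^sub>1;T\<^sub>2,u\<^sub>2)\<close> and \<open>spl(T\<^sub>2,u\<^sub>2;T\<^sub>1,u\<^sub>1)\<close> are the same tree, so every fact proved for
  vertices of \<open>T\<^sub>1\<close> transfers to vertices of \<open>T\<^sub>2\<close>.\<close>

lemma splice_swap: "splice V2 p2 V1 p1 u2 u1"
proof
  show "V2 \<inter> V1 = {}" using disjoint by blast
qed (fact u2 u1)+

lemma spl_par_swap: "y \<in> VV \<Longrightarrow> spl_par V2 p2 u2 V1 p1 u1 y = pp y"
  using disjoint by (auto simp: spl_par_def Let_def Un_commute)

lemma chain_splice_swap: "chain (V2 \<union> V1) (spl_par V2 p2 u2 V1 p1 u1) = chain VV pp"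
  unfolding Un_commute[of V2 V1] by (rule chain_cong) (rule spl_par_swap)

lemma comp_root_splice_swap: "comp_root (V2 \<union> V1) (spl_par V2 p2 u2 V1 p1 u1) = comp_root VV pp"
  unfolding Un_commute[of V2 V1] by (rule comp_root_cong) (rule spl_par_swap)

lemma chain_splice_V2:
  "x \<in> V2 \<Longrightarrow> chain VV pp x = chain V2 p2 x \<union> {a \<in> K1. a < comp_root V2 p2 u2 x}"
  using splice.chain_splice_V1[OF splice_swap] chain_splice_swap by simp

lemma anc_splice_of_anc_V2: "anc V2 p2 a x \<Longrightarrow> anc VV pp a x"
proof -
  assume "anc V2 p2 a x"
  then have "a \<in> chain (V2 \<union> V1) (spl_par V2 p2 u2 V1 p1 u1) x \<and> a \<noteq> x"
    using splice.anc_splice_of_anc_V1[OF splice_swap] T2.anc_imp_mem_less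
    by (auto simp: mem_chain_iff)
  then show ?thesis by (auto simp: chain_splice_swap mem_chain_iff)
qed

lemma comp_root_splice_V1:
  assumes w: "w \<in> V1" and x: "x \<in> V1"
  shows "comp_root VV pp w x = comp_root V1 p1 w x"
proof (rule comp_root_eqI)
  let ?c = "comp_root V1 p1 w x"
  note cr = T1.comp_root_props[OF w x]
  note crw = T1.comp_root_props[OF u1 w] and crx = T1.comp_root_props[OF u1 x]
  note chw = chain_splice_V1[OF w] and chx = chain_splice_V1[OF x]
  show "finite (chain VV pp w)" using T.finite_chain w by simp
  show "?c \<in> chain VV pp w" "?c \<in> chain VV pp x"
    unfolding chw chx using cr(1,2) by blast+
  fix d assume d: "d \<in> chain VV pp w" "d \<in> chain VV pp x"
  show "d \<le> ?c"
  proof (cases "d \<in> V1")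
    case True
    then have "d \<in> chain V1 p1 w \<inter> chain V1 p1 x"
      using d K2_subset disjoint unfolding chw chx by blast
    then show ?thesis using cr(3) by blast
  next
    case False
    then have "d < comp_root V1 p1 u1 w" "d < comp_root V1 p1 u1 x"
      using d T1.chain_subset[OF w] T1.chain_subset[OF x] unfolding chw chx by blast+
    moreover have "min (comp_root V1 p1 u1 w) (comp_root V1 p1 u1 x) \<le> ?c"
      using T1.min_mem_chains[OF crw(1) crx(1) crw(2) crx(2)] cr(3) by blast
    ultimately show ?thesis by simp
  qed
qed

lemma comp_root_splice_V2_V1:
  assumes w: "w \<in> V2" and x: "x \<in> V1"
  shows "comp_root VV pp w x = min (comp_root V1 p1 u1 x) (comp_root V2 p2 u2 w)"
proof (rule comp_root_eqI)
  let ?a = "comp_root V1 p1 u1 x" and ?c = "comp_root V2 p2 u2 w"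
  note crx = T1.comp_root_props[OF u1 x] and crw = T2.comp_root_props[OF u2 w]
  note chw = chain_splice_V2[OF w] and chx = chain_splice_V1[OF x]
  have "?a \<noteq> ?c" using crx(1) crw(1) K1_subset K2_subset disjoint by (metis disjoint_iff subsetD)
  show "finite (chain VV pp w)" using T.finite_chain w by simp
  show "min ?a ?c \<in> chain VV pp w" "min ?a ?c \<in> chain VV pp x"
  proof (atomize(full), cases "?a < ?c")
    case True
    then show "min ?a ?c \<in> chain VV pp w \<and> min ?a ?c \<in> chain VV pp x"
      unfolding chw chx using crx(1,2) by (simp add: min_def)
  next
    case False
    then have "?c < ?a" using \<open>?a \<noteq> ?c\<close> by simp
    then show "min ?a ?c \<in> chain VV pp w \<and> min ?a ?c \<in> chain VV pp x"
      unfolding chw chx using crw(1,2) by (simp add: min_def)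
  qed
  fix d assume d: "d \<in> chain VV pp w" "d \<in> chain VV pp x"
  show "d \<le> min ?a ?c"
  proof (cases "d \<in> V1")
    case True
    then have "d \<notin> chain V2 p2 w" "d \<notin> K2"
      using T2.chain_subset[OF w] K2_subset disjoint by blast+
    then have "d \<in> K1 \<inter> chain V1 p1 x" "d < ?c"
      using d unfolding chw chx by auto
    then show ?thesis using crx(3) by auto
  next
    case False
    then have "d \<notin> chain V1 p1 x" using T1.chain_subset[OF x] by blast
    then have "d \<in> K2" "d < ?a" using d(2) unfolding chx by auto
    moreover have "d \<in> chain V2 p2 w" using d(1) \<open>d \<notin> V1\<close> K1_subset unfolding chw by auto
    ultimately show ?thesis using crw(3) by auto
  qed
qed

lemma comp_root_splice_V2:
  "w \<in> V2 \<Longrightarrow> x \<in> V2 \<Longrightarrow> comp_root VV pp w x = comp_root V2 p2 w x"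
  using splice.comp_root_splice_V1[OF splice_swap] comp_root_splice_swap by simp

lemma comp_root_splice_V1_V2:
  "w \<in> V1 \<Longrightarrow> x \<in> V2 \<Longrightarrow> comp_root VV pp w x = min (comp_root V2 p2 u2 x) (comp_root V1 p1 u1 w)"
  using splice.comp_root_splice_V2_V1[OF splice_swap] comp_root_splice_swap by simp

end

lemma dg_connected_invariant:
  assumes "dg_connected Vs E" "B0 \<in> Vs" "B \<in> Vs" "Q B0"
    and "\<And>X Y. (X, Y) \<in> E \<Longrightarrow> Q X \<longleftrightarrow> Q Y"
  shows "Q B"
proof -
  have "(B0, B) \<in> (E \<union> E\<inverse>)\<^sup>*" using assms(1-3) by (simp add: dg_connected_def)
  then show ?thesis
  proof (induction rule: rtrancl_induct)
    case base show ?case using assms(4) .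
  next
    case (step Y Z) then show ?case using assms(5) by blast
  qed
qed

lemma rtrancl_sym_edge_iff:
  "(X, Y) \<in> E \<Longrightarrow> (X, h) \<in> (E \<union> E\<inverse>)\<^sup>* \<longleftrightarrow> (Y, h) \<in> (E \<union> E\<inverse>)\<^sup>*"
  by (meson UnI1 UnI2 converse_iff converse_rtrancl_into_rtrancl)

lemma dg_connectedI_hub:
  assumes "\<And>B. B \<in> Vs \<Longrightarrow> (B, h) \<in> (E \<union> E\<inverse>)\<^sup>*"
  shows "dg_connected Vs E"
proof -
  have "(h, B') \<in> (E \<union> E\<inverse>)\<^sup>*" if "B' \<in> Vs" for B'
  proof -
    have "(B', h) \<in> (E \<union> E\<inverse>)\<^sup>*" using assms that .
    then have "(h, B') \<in> ((E \<union> E\<inverse>)\<inverse>)\<^sup>*" by (rule rtrancl_converseI)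
    then show ?thesis by (simp add: converse_Un Un_commute)
  qed
  then show ?thesis using assms unfolding dg_connected_def by (meson rtrancl_trans)
qed

lemma blk_eqI: "set_partition r P \<Longrightarrow> B \<in> P \<Longrightarrow> x \<in> B \<Longrightarrow> blk P x = B"
  unfolding blk_def set_partition_def by (rule the_equality) blast+

context
  fixes r P W q
  assumes partition: "set_partition r P" and pi: "pi_increasing P W q"
begin

lemma blk_in_dg_vert:
  assumes "x \<in> W"
  shows "x \<in> blk P x" "blk P x \<in> dg_vert P W"
proof -
  have "W = \<Union>{B \<in> P. B \<subseteq> W}" using pi by (simp add: pi_increasing_def)
  then obtain B where "B \<in> P" "B \<subseteq> W" "x \<in> B" using assms by blast
  moreover from this have "blk P x = B" using blk_eqI partition by blast
  ultimately show "x \<in> blk P x" "blk P x \<in> dg_vert P W" by (auto simp: dg_vert_def)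
qed

lemma finite_block: "X \<in> dg_vert P W \<Longrightarrow> finite X"
  using pi finite_subset by (auto simp: dg_vert_def pi_increasing_def increasing_tree_def)

lemma Max_block_mem:
  assumes "X \<in> dg_vert P W"
  shows "Max X \<in> X" "Max X \<in> W"
proof -
  have "finite X" using assms by (rule finite_block)
  moreover have "X \<noteq> {}" using assms partition by (auto simp: dg_vert_def set_partition_def)
  ultimately show "Max X \<in> X" by simp
  then show "Max X \<in> W" using assms by (auto simp: dg_vert_def)
qed

lemma block_mem_chain_Max:
  assumes "X \<in> dg_vert P W" "a \<in> X"
  shows "a \<in> chain W q (Max X)"
proof -
  have "a \<le> Max X" using finite_block[OF assms(1)] assms(2) by (rule Max_ge)
  then show ?thesis
    using assms Max_block_mem(1)[OF assms(1)] pi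
    by (cases "a = Max X") (auto simp: pi_increasing_def dg_vert_def mem_chain_iff)
qed

lemma dg_edge_in_dg_vert:
  assumes v: "v \<in> W" and e: "(X, Y) \<in> dg_edges P W q v"
  shows "X \<in> dg_vert P W" "Y \<in> dg_vert P W"
proof -
  interpret itree W q using pi by unfold_locales (simp add: pi_increasing_def)
  show X: "X \<in> dg_vert P W" using e by (auto simp: mem_dg_edges_iff dg_vert_def)
  have "comp_root W q v (Max X) \<in> W"
    using comp_root_props(1)[OF v Max_block_mem(2)[OF X]] chain_subset[OF v] by blast
  then show "Y \<in> dg_vert P W" using e blk_in_dg_vert(2) by (auto simp: mem_dg_edges_iff)
qed

end

locale pi_splice = splice V1 p1 V2 p2 u1 u2 for V1 p1 V2 p2 u1 u2 +
  fixes r :: nat and P :: "nat set set"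
  assumes partition: "set_partition r P"
    and pi1: "pi_increasing P V1 p1" and pi2: "pi_increasing P V2 p2"
begin

lemma dg_vert_disjoint: "dg_vert P V1 \<inter> dg_vert P V2 = {}"
proof -
  have "X = {}" if "X \<in> dg_vert P V1" "X \<in> dg_vert P V2" for X
    using that disjoint by (auto simp: dg_vert_def)
  then show ?thesis using partition by (auto simp: dg_vert_def set_partition_def)
qed

lemma block_subset_V1_or_V2:
  assumes X: "X \<in> P" "X \<subseteq> VV"
  shows "X \<subseteq> V1 \<or> X \<subseteq> V2"
proof -
  have "X \<noteq> {}" using X(1) partition by (simp add: set_partition_def)
  then obtain x where x: "x \<in> X" by blast
  have "blk P x = X" using blk_eqI[OF partition X(1) x] .
  then show ?thesis
    using x X(2) blk_in_dg_vert(2)[OF partition pi1] blk_in_dg_vert(2)[OF partition pi2]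
    by (auto simp: dg_vert_def)
qed

lemma dg_vert_splice: "dg_vert P VV = dg_vert P V1 \<union> dg_vert P V2"
  using block_subset_V1_or_V2 by (auto simp: dg_vert_def)

lemma pi_increasing_splice: "pi_increasing P VV pp"
  unfolding pi_increasing_def
proof (intro conjI ballI impI)
  show "increasing_tree VV pp" by (rule increasing_tree_splice)
  have "x \<in> \<Union>{B \<in> P. B \<subseteq> VV}" if "x \<in> VV" for x
  proof -
    have "blk P x \<in> dg_vert P V1 \<union> dg_vert P V2" "x \<in> blk P x"
      using that blk_in_dg_vert[OF partition pi1] blk_in_dg_vert[OF partition pi2] by blast+
    then show ?thesis by (auto simp: dg_vert_def)
  qed
  then show "VV = \<Union>{B \<in> P. B \<subseteq> VV}" by blast
  fix B i j assume B: "B \<in> P" "B \<subseteq> VV" and ij: "i \<in> B" "j \<in> B" "i < j"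
  from block_subset_V1_or_V2[OF B] show "anc VV pp i j"
  proof
    assume "B \<subseteq> V1"
    then show ?thesis using pi1 B ij anc_splice_of_anc_V1 by (auto simp: pi_increasing_def)
  next
    assume "B \<subseteq> V2"
    then show ?thesis using pi2 B ij anc_splice_of_anc_V2 by (auto simp: pi_increasing_def)
  qed
qed

lemma chain_splice_u1: "u2 < u1 \<Longrightarrow> chain VV pp u1 = K1 \<union> K2"
  using chain_splice_V1[OF u1] T1.comp_root_self[OF u1] T2.chain_le by fastforce

lemma dg_edges_splice:
  assumes "u2 < u1"
  shows "dg_edges P VV pp u1 = dg_edges P V1 p1 u1 \<union> dg_edges P V2 p2 u2"
proof -
  note chain_u1 = chain_splice_u1[OF assms]
  have "(X, Y) \<in> dg_edges P VV pp u1 \<longleftrightarrow> (X, Y) \<in> dg_edges P V1 p1 u1 \<union> dg_edges P V2 p2 u2"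
    for X Y
  proof -
    consider "X \<in> dg_vert P V1" | "X \<in> dg_vert P V2" | "X \<notin> dg_vert P VV"
      using dg_vert_splice by blast
    then show ?thesis
    proof cases
      case 1
      then have x: "Max X \<in> V1" by (rule Max_block_mem(2)[OF partition pi1])
      then have "Max X \<notin> K2" using K2_subset disjoint by blast
      moreover have "X \<in> P" "X \<subseteq> V1" "X \<subseteq> VV" "\<not> X \<subseteq> V2"
        using 1 dg_vert_disjoint by (auto simp: dg_vert_def)
      ultimately show ?thesis
        by (simp add: mem_dg_edges_iff chain_u1 comp_root_splice_V1[OF u1 x])
    next
      case 2
      then have x: "Max X \<in> V2" by (rule Max_block_mem(2)[OF partition pi2])
      then have "Max X \<notin> K1" using K1_subset disjoint by blast
      moreover have "X \<in> P" "X \<subseteq> V2" "X \<subseteq> VV" "\<not> X \<subseteq> V1"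
        using 2 dg_vert_disjoint by (auto simp: dg_vert_def)
      moreover have "comp_root V2 p2 u2 (Max X) < u1"
        using T2.chain_le[OF T2.comp_root_props(1)[OF u2 x]] assms by simp
      ultimately show ?thesis
        by (simp add: mem_dg_edges_iff chain_u1 comp_root_splice_V1_V2[OF u1 x]
            T1.comp_root_self[OF u1])
    next
      case 3
      then have "\<not> (X \<in> P \<and> X \<subseteq> VV)" by (simp add: dg_vert_def)
      then show ?thesis by (auto simp: mem_dg_edges_iff)
    qed
  qed
  then show ?thesis by auto
qed

text \<open>No edge of \<open>G\<^sub>u\<^sub>1(T)\<close> joins a block of \<open>T\<^sub>1\<close> to a block of \<open>T\<^sub>2\<close>.\<close>

lemma not_dg_connected_splice:
  assumes "u2 < u1"
  shows "\<not> dg_connected (dg_vert P VV) (dg_edges P VV pp u1)"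
proof
  assume conn: "dg_connected (dg_vert P VV) (dg_edges P VV pp u1)"
  have V2_block: "\<not> X \<subseteq> V1" if "X \<in> dg_vert P V2" for X
    using that dg_vert_disjoint by (auto simp: dg_vert_def)
  have invariant: "X \<subseteq> V1 \<longleftrightarrow> Y \<subseteq> V1" if "(X, Y) \<in> dg_edges P VV pp u1" for X Y
  proof -
    from that consider "(X, Y) \<in> dg_edges P V1 p1 u1" | "(X, Y) \<in> dg_edges P V2 p2 u2"
      unfolding dg_edges_splice[OF assms] by blast
    then show ?thesis
    proof cases
      case 1
      then show ?thesis using dg_edge_in_dg_vert[OF partition pi1 u1] by (auto simp: dg_vert_def)
    next
      case 2
      then show ?thesis using dg_edge_in_dg_vert[OF partition pi2 u2] V2_block by blast
    qed
  qed
  have blocks: "blk P u1 \<in> dg_vert P VV" "blk P u2 \<in> dg_vert P VV"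
    using blk_in_dg_vert(2)[OF partition pi1 u1] blk_in_dg_vert(2)[OF partition pi2 u2]
      dg_vert_splice by auto
  have "blk P u1 \<subseteq> V1"
    using blk_in_dg_vert(2)[OF partition pi1 u1] by (simp add: dg_vert_def)
  then have "blk P u2 \<subseteq> V1"
    using dg_connected_invariant[OF conn blocks, where Q = "\<lambda>X. X \<subseteq> V1"] invariant by blast
  then show False using V2_block blk_in_dg_vert(2)[OF partition pi2 u2] by blast
qed


lemma dg_edges_V2_subset_splice:
  assumes w: "w \<in> V2"
  shows "dg_edges P V2 p2 w \<subseteq> dg_edges P VV pp w"
proof (rule subsetI, unfold split_paired_all)
  fix X Y assume e: "(X, Y) \<in> dg_edges P V2 p2 w"
  have X: "X \<in> P" "X \<subseteq> V2" "Max X \<notin> chain V2 p2 w" "Y = blk P (comp_root V2 p2 w (Max X))"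
    using e by (auto simp: mem_dg_edges_iff)
  have x: "Max X \<in> V2" using dg_edge_in_dg_vert(1)[OF partition pi2 w e] Max_block_mem(2)[OF partition pi2] by blast
  then have "Max X \<notin> K1" using K1_subset disjoint by blast
  then have "Max X \<notin> chain VV pp w" using X(3) chain_splice_V2[OF w] by simp
  then show "(X, Y) \<in> dg_edges P VV pp w"
    using X comp_root_splice_V2[OF w x] by (auto simp: mem_dg_edges_iff)
qed

lemma dg_edge_V1_splice:
  assumes w: "w \<in> V2" and X: "X \<in> dg_vert P V1"
    and off: "Max X \<notin> K1 \<or> comp_root V2 p2 u2 w < comp_root V1 p1 u1 (Max X)"
  shows "(X, blk P (min (comp_root V1 p1 u1 (Max X)) (comp_root V2 p2 u2 w))) \<in> dg_edges P VV pp w"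
proof -
  have x: "Max X \<in> V1" using Max_block_mem(2)[OF partition pi1 X] .
  have "comp_root V1 p1 u1 (Max X) \<le> Max X"
    using T1.chain_le[OF T1.comp_root_props(2)[OF u1 x]] .
  then have "Max X \<notin> {a \<in> K1. a < comp_root V2 p2 u2 w}" using off by auto
  moreover have "Max X \<notin> chain V2 p2 w" using x T2.chain_subset[OF w] disjoint by blast
  ultimately have "Max X \<notin> chain VV pp w" using chain_splice_V2[OF w] by simp
  then show ?thesis
    using X comp_root_splice_V2_V1[OF w x] by (auto simp: mem_dg_edges_iff dg_vert_def)
qed

lemma dg_edge_V1_to_branch_splice:
  assumes w: "w \<in> V2" and X: "X \<in> dg_vert P V1"
    and a: "a \<in> X" "a \<in> K1" "comp_root V2 p2 u2 w < a"
  shows "(X, blk P (comp_root V2 p2 u2 w)) \<in> dg_edges P VV pp w"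
proof -
  have x: "Max X \<in> V1" using Max_block_mem(2)[OF partition pi1 X] .
  have "a \<in> chain V1 p1 (Max X)" using block_mem_chain_Max[OF partition pi1 X a(1)] .
  then have "a \<le> comp_root V1 p1 u1 (Max X)" using T1.comp_root_props(3)[OF u1 x] a(2) by blast
  then have "comp_root V2 p2 u2 w < comp_root V1 p1 u1 (Max X)" using a(3) by simp
  then show ?thesis using dg_edge_V1_splice[OF w X] by (simp add: min_def)
qed

lemma V2_block_connected_splice:
  assumes w: "w \<in> V2" and conn2: "dg_connected (dg_vert P V2) (dg_edges P V2 p2 w)"
    and B: "B \<in> dg_vert P V2"
  shows "(B, blk P (comp_root V2 p2 u2 w)) \<in> (dg_edges P VV pp w \<union> (dg_edges P VV pp w)\<inverse>)\<^sup>*"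
proof (rule dg_connected_invariant[OF conn2 _ B])
  have "comp_root V2 p2 u2 w \<in> V2" using T2.comp_root_props(1)[OF u2 w] K2_subset by blast
  then show "blk P (comp_root V2 p2 u2 w) \<in> dg_vert P V2" by (rule blk_in_dg_vert(2)[OF partition pi2])
next
  fix X Y assume "(X, Y) \<in> dg_edges P V2 p2 w"
  then have "(X, Y) \<in> dg_edges P VV pp w" using dg_edges_V2_subset_splice[OF w] by blast
  then show "(X, blk P (comp_root V2 p2 u2 w)) \<in> (dg_edges P VV pp w \<union> (dg_edges P VV pp w)\<inverse>)\<^sup>* \<longleftrightarrow>
      (Y, blk P (comp_root V2 p2 u2 w)) \<in> (dg_edges P VV pp w \<union> (dg_edges P VV pp w)\<inverse>)\<^sup>*"
    by (rule rtrancl_sym_edge_iff)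
qed simp

lemma V1_block_connected_splice:
  assumes w: "w \<in> V2" and less: "u2 < u1"
    and conn1: "dg_connected (dg_vert P V1) (dg_edges P V1 p1 u1)"
    and B: "B \<in> dg_vert P V1"
  shows "(B, blk P (comp_root V2 p2 u2 w)) \<in> (dg_edges P VV pp w \<union> (dg_edges P VV pp w)\<inverse>)\<^sup>*"
    (is "(B, ?h) \<in> ?R")
proof -
  let ?c = "comp_root V2 p2 u2 w"
  have c_less: "?c < u1" using T2.chain_le[OF T2.comp_root_props(1)[OF u2 w]] less by simp
  have hub: "(X, ?h) \<in> ?R" if "X \<in> dg_vert P V1" "a \<in> X" "a \<in> K1" "?c < a" for X a
    using dg_edge_V1_to_branch_splice[OF w that] by blast
  show ?thesis
  proof (rule dg_connected_invariant[OF conn1 _ B])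
    show "blk P u1 \<in> dg_vert P V1" using blk_in_dg_vert(2)[OF partition pi1 u1] .
    show "(blk P u1, ?h) \<in> ?R"
      using hub[OF _ blk_in_dg_vert(1)[OF partition pi1 u1]] blk_in_dg_vert(2)[OF partition pi1 u1]
        T1.self_in_chain c_less by blast
    fix X Y assume e: "(X, Y) \<in> dg_edges P V1 p1 u1"
    let ?a = "comp_root V1 p1 u1 (Max X)"
    have X: "X \<in> dg_vert P V1" "Max X \<notin> K1" and Y: "Y = blk P ?a"
      using e dg_edge_in_dg_vert(1)[OF partition pi1 u1 e] by (auto simp: mem_dg_edges_iff)
    have x: "Max X \<in> V1" using Max_block_mem(2)[OF partition pi1 X(1)] .
    have aK: "?a \<in> K1" using T1.comp_root_props(1)[OF u1 x] .
    then have "?a \<noteq> ?c" using T2.comp_root_props(1)[OF u2 w] K1_subset K2_subset disjoint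
      by (metis disjoint_iff subsetD)
    then consider "?a < ?c" | "?c < ?a" by linarith
    then show "(X, ?h) \<in> ?R \<longleftrightarrow> (Y, ?h) \<in> ?R"
    proof cases
      case 1
      then have "(X, Y) \<in> dg_edges P VV pp w" using dg_edge_V1_splice[OF w X(1)] X(2) Y by simp
      then show ?thesis by (rule rtrancl_sym_edge_iff)
    next
      case 2
      have "?a \<in> V1" using aK K1_subset by blast
      then have "(Y, ?h) \<in> ?R"
        using hub[OF _ _ aK 2] blk_in_dg_vert[OF partition pi1] Y by blast
      moreover have "(X, ?h) \<in> dg_edges P VV pp w"
        using dg_edge_V1_splice[OF w X(1)] X(2) 2 by (simp add: min_def)
      ultimately show ?thesis by blast
    qed
  qed
qed

lemma dg_connected_splice:
  assumes "w \<in> V2" "u2 < u1"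
    and "dg_connected (dg_vert P V1) (dg_edges P V1 p1 u1)"
    and "dg_connected (dg_vert P V2) (dg_edges P V2 p2 w)"
  shows "dg_connected (dg_vert P VV) (dg_edges P VV pp w)"
  using V1_block_connected_splice[OF assms(1-3)] V2_block_connected_splice[OF assms(1,4)] dg_vert_splice
  by (intro dg_connectedI_hub) auto

end

theorem lemma3p5:
  fixes r :: nat and P :: "nat set set"
    and V1 V2 :: "nat set" and p1 p2 :: "nat \<Rightarrow> nat" and v2 :: nat
  assumes "r \<ge> 2" and "set_partition r P" and "{1} \<in> P"
    and "pi_increasing P V1 p1" and "pi_increasing P V2 p2"
    and "V1 \<inter> V2 = {}"
    and "irreducible P V1 p1"
    and "v2 \<in> V2" and "v2 < Max V1"
  shows "(Max V1 > Max V2 \<longrightarrow>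
            reducible P (V1 \<union> V2) (spl_par V1 p1 (Max V1) V2 p2 v2) \<and>
            dg_vert P (V1 \<union> V2) = dg_vert P V1 \<union> dg_vert P V2 \<and>
            dg_edges P (V1 \<union> V2) (spl_par V1 p1 (Max V1) V2 p2 v2) (Max V1)
              = dg_edges P V1 p1 (Max V1) \<union> dg_edges P V2 p2 v2)
       \<and> (Max V1 < Max V2 \<and> irreducible P V2 p2 \<longrightarrow>
            irreducible P (V1 \<union> V2) (spl_par V1 p1 (Max V1) V2 p2 v2))"
proof -
  note partition = assms(2) and pi = assms(4,5) and less = assms(9)
  have fin: "finite V1" "finite V2" and ne: "V1 \<noteq> {}" "V2 \<noteq> {}"
    using pi by (auto simp: pi_increasing_def increasing_tree_def)
  then have M: "Max V1 \<in> V1" "Max V2 \<in> V2" by simp_all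
  interpret pi_splice V1 p1 V2 p2 "Max V1" v2 r P
    using partition pi M(1) assms(6,8) by unfold_locales (auto simp: pi_increasing_def)
  have Max_VV: "Max (V1 \<union> V2) = max (Max V1) (Max V2)" using Max_Un[OF fin(1) ne(1) fin(2) ne(2)] .
  have conn1: "dg_connected (dg_vert P V1) (dg_edges P V1 p1 (Max V1))"
    using assms(7) by (simp add: irreducible_def)
  show ?thesis
  proof (intro conjI impI)
    assume "Max V1 > Max V2"
    then show "reducible P (V1 \<union> V2) (spl_par V1 p1 (Max V1) V2 p2 v2)"
      using pi_increasing_splice not_dg_connected_splice[OF less] Max_VV by (simp add: reducible_def)
    show "dg_vert P (V1 \<union> V2) = dg_vert P V1 \<union> dg_vert P V2" by (rule dg_vert_splice)
    show "dg_edges P (V1 \<union> V2) (spl_par V1 p1 (Max V1) V2 p2 v2) (Max V1)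
        = dg_edges P V1 p1 (Max V1) \<union> dg_edges P V2 p2 v2" by (rule dg_edges_splice[OF less])
  next
    assume "Max V1 < Max V2 \<and> irreducible P V2 p2"
    then have "Max (V1 \<union> V2) = Max V2"
      and conn2: "dg_connected (dg_vert P V2) (dg_edges P V2 p2 (Max V2))"
      using Max_VV by (auto simp: irreducible_def)
    then show "irreducible P (V1 \<union> V2) (spl_par V1 p1 (Max V1) V2 p2 v2)"
      using pi_increasing_splice dg_connected_splice[OF M(2) less conn1 conn2]
      by (simp add: irreducible_def)
  qed
qed

end
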